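(* Let $\mathcal{A}=\{A_1,\dots,A_m\}$ be a bimodal collection of pairwise disjoint nonempty subsets of a finite abelian group $G$, with internal difference groups $H_1,\dots,H_m$, labelled so that $|A_i|<|H_i|$ exactly for $i=1,\dots,r$, where $r\ge2$. Let $D=(a_1+H_1)\setminus A_1$, where $a_1+H_1$ is the coset of $H_1$ containing $A_1$, and suppose $\mathcal{A}$ is in canonical position, i.e. $D$ is a subgroup of $G$. Let $A=A_1\cup\dots\cup A_m$ and $H=H_1+\dots+H_r$. Then: (1) $H_1,\dots,H_r$ form an $r$-star with kernel $D$ (i.e. $H_i\cap H_j=D$ for all distinct $i,j\le r$), and $A_i=H_i\setminus D$ for each $1\le i\le r$; (2) every $A_i$ with $i>r$ is a coset of a subgroup of $D$; (3) $H\setminus D\subseteq A$, and the sets in $\mathcal{A}$ with index greater than $r$ can be relabelled so that for some $k$ with $r\le k\le m$ the set $H\setminus D$ is partitioned by $A_1,\dots,A_k$; (4) if $k<m$, then the sets $A_i$ with $i>k$ arise from a subdivision of cosets of $H$, i.e. their union is a union of cosets of $H$ and each of them is a coset of a subgroup of $G$ contained in a single coset of $H$.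
   Context: $G$ is written additively. The internal difference group $H_i$ of $A_i$ is the subgroup generated by all $x-y$ with $x,y\in A_i$; $A_i$ lies in a single coset of $H_i$ and $|A_i|\le|H_i|$. A collection $\{A_1,\dots,A_m\}$ of pairwise disjoint subsets of $G$ is bimodal if for every $i$ and every $\delta\in G\setminus\{0\}$, the number $N_i(\delta)$ of pairs $(a,b)$ with $a\in A_i$, $b\in A_j$ for some $j\neq i$, and $a-b=\delta$, satisfies $N_i(\delta)\in\{0,|A_i|\}$. (For such collections with $r\ge2$ the set $D$ equals $(a_i+H_i)\setminus A_i$ for every $i\le r$ and is a coset of a subgroup; canonical position means the collection has been translated so that $D$ is a subgroup.) *)

theory Defs
  imports Main
begin

definition add_subgrp :: "'a::ab_group_add set \<Rightarrow> bool" where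
  "add_subgrp K \<longleftrightarrow> 0 \<in> K \<and> (\<forall>x\<in>K. \<forall>y\<in>K. x - y \<in> K)"

definition gen_subgrp :: "'a::ab_group_add set \<Rightarrow> 'a set" where
  "gen_subgrp S = \<Inter>{K. add_subgrp K \<and> S \<subseteq> K}"

definition idg :: "'a::ab_group_add set \<Rightarrow> 'a set" where
  "idg X = gen_subgrp {x - y | x y. x \<in> X \<and> y \<in> X}"

definition transl :: "'a::ab_group_add \<Rightarrow> 'a set \<Rightarrow> 'a set" where
  "transl c K = (\<lambda>h. c + h) ` K"

definition is_coset_of :: "'a::ab_group_add set \<Rightarrow> 'a set \<Rightarrow> bool" where
  "is_coset_of X K \<longleftrightarrow> (\<exists>c. X = transl c K)"

definition Ncount :: "(nat \<Rightarrow> 'a::ab_group_add set) \<Rightarrow> nat \<Rightarrow> nat \<Rightarrow> 'a \<Rightarrow> nat" where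
  "Ncount A m i \<delta> = card {(a, b). a \<in> A i \<and> (\<exists>j\<in>{1..m}. j \<noteq> i \<and> b \<in> A j) \<and> a - b = \<delta>}"

definition bimodal :: "(nat \<Rightarrow> 'a::ab_group_add set) \<Rightarrow> nat \<Rightarrow> bool" where
  "bimodal A m \<longleftrightarrow> (\<forall>i\<in>{1..m}. \<forall>\<delta>. \<delta> \<noteq> 0 \<longrightarrow> Ncount A m i \<delta> \<in> {0, card (A i)})"

definition sumset :: "(nat \<Rightarrow> 'a::ab_group_add set) \<Rightarrow> nat \<Rightarrow> 'a set" where
  "sumset H r = {\<Sum>i\<in>{1..r}. h i | h. \<forall>i\<in>{1..r}. h i \<in> H i}"

end

theory Submission
  imports Defs
begin

text \<open>
  The engine is a periodicity property of bimodal collections: for every \<open>i\<close>, the set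
  \<open>U - A i\<close> of points covered by the other members is invariant under translation by
  \<open>H i\<close>. Indeed, bimodality says that once some \<open>a \<in> A i\<close> has a partner \<open>b\<close> outside
  \<open>A i\<close> at difference \<open>a - b\<close>, every element of \<open>A i\<close> does, so the periods of
  \<open>U - A i\<close> contain all differences of \<open>A i\<close>. In canonical position \<open>0 \<in> D\<close> is not
  covered, and comparing the periods of two members through this uncovered region forces
  \<open>H i \<inter> H j \<subseteq> D\<close>, \<open>A i = H i - D\<close> for the deficient members and \<open>H i \<subseteq> D\<close> for
  the others, which are then cosets. Adding the star groups one at a time,
  \<open>D \<union> U\<close> absorbs \<open>H\<close>, while the covered points outside \<open>H\<close> are \<open>H\<close>-periodic;
  sorting the remaining members by whether their coset lies in \<open>H\<close> gives the partition.
\<close>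

lemma add_subgrp_zero: "add_subgrp K \<Longrightarrow> 0 \<in> K"
  by (simp add: add_subgrp_def)

lemma add_subgrp_diff: "add_subgrp K \<Longrightarrow> a \<in> K \<Longrightarrow> b \<in> K \<Longrightarrow> a - b \<in> K"
  by (simp add: add_subgrp_def)

lemma add_subgrp_uminus: "add_subgrp K \<Longrightarrow> a \<in> K \<Longrightarrow> - a \<in> K"
  using add_subgrp_diff[of K 0 a] add_subgrp_zero[of K] by simp

lemma add_subgrp_add: "add_subgrp K \<Longrightarrow> a \<in> K \<Longrightarrow> b \<in> K \<Longrightarrow> a + b \<in> K"
  using add_subgrp_diff[of K a "- b"] add_subgrp_uminus[of K b] by simp

lemma add_subgrp_idg: "add_subgrp (idg X)"
  unfolding idg_def gen_subgrp_def add_subgrp_def by auto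

lemma diff_mem_idg: "x \<in> X \<Longrightarrow> y \<in> X \<Longrightarrow> x - y \<in> idg X"
  unfolding idg_def gen_subgrp_def by blast

lemma idg_least: "add_subgrp K \<Longrightarrow> (\<And>x y. x \<in> X \<Longrightarrow> y \<in> X \<Longrightarrow> x - y \<in> K) \<Longrightarrow> idg X \<subseteq> K"
  unfolding idg_def gen_subgrp_def by blast

lemma mem_transl_iff: "y \<in> transl c K \<longleftrightarrow> y - c \<in> K"
  unfolding transl_def by (auto simp: image_iff) (metis add.commute diff_add_cancel)

lemma card_transl: "card (transl c K) = card K"
  unfolding transl_def by (rule card_image) (simp add: inj_on_def)

lemma subset_transl_idg: "x \<in> X \<Longrightarrow> X \<subseteq> transl x (idg X)"
  by (auto simp: mem_transl_iff diff_mem_idg)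

lemma subset_idg_if_mem:
  assumes "x \<in> X" "x \<in> idg X"
  shows "X \<subseteq> idg X"
proof
  fix y assume "y \<in> X"
  then have "(y - x) + x \<in> idg X"
    using assms add_subgrp_add[OF add_subgrp_idg] diff_mem_idg by blast
  then show "y \<in> idg X" by simp
qed

lemma transl_subgrp_eq: "add_subgrp K \<Longrightarrow> c \<in> K \<Longrightarrow> transl c K = K"
  unfolding set_eq_iff mem_transl_iff
  by (metis add_subgrp_add add_subgrp_diff diff_add_cancel)

lemma mem_transl_subgrp_iff:
  assumes G: "add_subgrp G" and "K \<subseteq> G" "y \<in> transl x K"
  shows "y \<in> G \<longleftrightarrow> x \<in> G"
proof -
  have "y - x \<in> G" using assms by (auto simp: mem_transl_iff)
  then show ?thesis
    using add_subgrp_diff[OF G, of y "y - x"] add_subgrp_add[OF G, of "y - x" x] by auto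
qed

lemma transl_idg_eq_if_zero_mem:
  assumes "a \<in> X" "0 \<in> transl a (idg X)"
  shows "transl a (idg X) = idg X" "X \<subseteq> idg X"
proof -
  have "a \<in> idg X"
    using assms(2) add_subgrp_uminus[OF add_subgrp_idg, of "- a"] by (simp add: mem_transl_iff)
  then show "transl a (idg X) = idg X" "X \<subseteq> idg X"
    using transl_subgrp_eq[OF add_subgrp_idg] subset_idg_if_mem[OF assms(1)] by auto
qed

lemma eq_transl_idg_if_card_le:
  fixes X :: "'a::{finite, ab_group_add} set"
  assumes "card (idg X) \<le> card X" "x \<in> X"
  shows "X = transl x (idg X)"
  using assms subset_transl_idg[OF assms(2)] by (intro card_seteq) (auto simp: card_transl)

definition periods :: "'a::ab_group_add set \<Rightarrow> 'a set" where
  "periods B = {g. \<forall>b\<in>B. b + g \<in> B}"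

lemma add_subgrp_periods:
  assumes "finite B"
  shows "add_subgrp (periods B)"
  unfolding add_subgrp_def
proof (intro conjI ballI)
  show "0 \<in> periods B" unfolding periods_def by simp
  fix g1 g2 assume g1: "g1 \<in> periods B" and g2: "g2 \<in> periods B"
  have "(\<lambda>b. b + g2) ` B = B"
  proof (rule card_subset_eq)
    show "(\<lambda>b. b + g2) ` B \<subseteq> B" using g2 unfolding periods_def by auto
    show "card ((\<lambda>b. b + g2) ` B) = card B" by (rule card_image) (simp add: inj_on_def)
  qed (fact assms)
  then have "\<exists>b'\<in>B. b = b' + g2" if "b \<in> B" for b
    using that by (metis imageE)
  then show "g1 - g2 \<in> periods B"
    using g1 unfolding periods_def by (force simp: algebra_simps)
qed

lemma add_subgrp_sumset:
  assumes "\<And>i. i \<in> {1..r} \<Longrightarrow> add_subgrp (H i)"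
  shows "add_subgrp (sumset H r)"
  unfolding add_subgrp_def sumset_def
proof (intro conjI ballI)
  show "0 \<in> {\<Sum>i\<in>{1..r}. h i |h. \<forall>i\<in>{1..r}. h i \<in> H i}"
    using assms by (intro CollectI exI[of _ "\<lambda>_. 0"]) (auto simp: add_subgrp_zero)
  fix a b assume "a \<in> {\<Sum>i\<in>{1..r}. h i |h. \<forall>i\<in>{1..r}. h i \<in> H i}"
    and "b \<in> {\<Sum>i\<in>{1..r}. h i |h. \<forall>i\<in>{1..r}. h i \<in> H i}"
  then obtain g g' where "a = (\<Sum>i\<in>{1..r}. g i)" "b = (\<Sum>i\<in>{1..r}. g' i)"
    and "\<forall>i\<in>{1..r}. g i \<in> H i" "\<forall>i\<in>{1..r}. g' i \<in> H i" by blast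
  then show "a - b \<in> {\<Sum>i\<in>{1..r}. h i |h. \<forall>i\<in>{1..r}. h i \<in> H i}"
    using assms by (intro CollectI exI[of _ "\<lambda>i. g i - g' i"]) (auto simp: sum_subtractf add_subgrp_diff)
qed

lemma subset_sumset:
  assumes "\<And>j. j \<in> {1..r} \<Longrightarrow> 0 \<in> H j" "i \<in> {1..r}"
  shows "H i \<subseteq> sumset H r"
proof
  fix h assume "h \<in> H i"
  then have "h = (\<Sum>j\<in>{1..r}. if j = i then h else 0)" "\<forall>j\<in>{1..r}. (if j = i then h else 0) \<in> H j"
    using assms by auto
  then show "h \<in> sumset H r" unfolding sumset_def by blast
qed

lemma sumset_translate_closed:
  assumes "x \<in> S" "\<And>i v h. i \<in> {1..r} \<Longrightarrow> v \<in> S \<Longrightarrow> h \<in> H i \<Longrightarrow> v + h \<in> S"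
    and "s \<in> sumset H r"
  shows "x + s \<in> S"
proof -
  obtain g where s: "s = (\<Sum>i\<in>{1..r}. g i)" and g: "\<forall>i\<in>{1..r}. g i \<in> H i"
    using assms(3) unfolding sumset_def by blast
  have "t \<le> r \<Longrightarrow> x + (\<Sum>i\<in>{1..t}. g i) \<in> S" for t
  proof (induction t)
    case (Suc t)
    then show ?case
      using assms(2)[of "Suc t" "x + (\<Sum>i\<in>{1..t}. g i)" "g (Suc t)"] g by (simp add: add.assoc)
  qed (simp add: assms(1))
  then show ?thesis using s by simp
qed

lemma obtain_perm_splitting:
  fixes r m :: nat
  assumes "r \<le> m" "S \<subseteq> {r<..m}"
  obtains \<sigma> k where "bij_betw \<sigma> {1..m} {1..m}" "\<forall>i\<in>{1..r}. \<sigma> i = i" "r \<le> k" "k \<le> m"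
    "\<sigma> ` {1..k} = {1..r} \<union> S" "\<sigma> ` {k<..m} = {r<..m} - S"
proof -
  define k where "k = r + card S"
  have card_S: "card S + card ({r<..m} - S) = m - r"
    using assms card_Un_disjoint[of S "{r<..m} - S"] finite_subset[OF assms(2)]
    by (simp add: Un_absorb1)
  then have k: "r \<le> k" "k \<le> m" using assms(1) unfolding k_def by auto
  obtain f1 where f1: "bij_betw f1 {r<..k} S"
    using finite_same_card_bij[of "{r<..k}" S] finite_subset[OF assms(2)] unfolding k_def by auto
  obtain f2 where f2: "bij_betw f2 {k<..m} ({r<..m} - S)"
  proof -
    have "card {k<..m} = card ({r<..m} - S)" using card_S k unfolding k_def by simp
    then show thesis using finite_same_card_bij[of "{k<..m}" "{r<..m} - S"] that by auto
  qed
  define \<sigma> where "\<sigma> i = (if i \<le> r then i else if i \<le> k then f1 i else f2 i)" for i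
  have b0: "bij_betw \<sigma> {1..r} {1..r}"
    by (rule bij_betw_cong[THEN iffD1, OF _ bij_betw_id]) (auto simp: \<sigma>_def)
  have b1: "bij_betw \<sigma> {r<..k} S"
    by (rule bij_betw_cong[THEN iffD1, OF _ f1]) (auto simp: \<sigma>_def)
  have b2: "bij_betw \<sigma> {k<..m} ({r<..m} - S)"
    by (rule bij_betw_cong[THEN iffD1, OF _ f2]) (use k in \<open>auto simp: \<sigma>_def\<close>)
  have b01: "bij_betw \<sigma> {1..k} ({1..r} \<union> S)"
  proof -
    have "bij_betw \<sigma> ({1..r} \<union> {r<..k}) ({1..r} \<union> S)"
      by (rule bij_betw_combine[OF b0 b1]) (use assms(2) in auto)
    moreover have "{1..r} \<union> {r<..k} = {1..k}" using k by auto
    ultimately show ?thesis by simp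
  qed
  have "bij_betw \<sigma> ({1..k} \<union> {k<..m}) ({1..r} \<union> S \<union> ({r<..m} - S))"
    by (rule bij_betw_combine[OF b01 b2]) auto
  moreover have "{1..k} \<union> {k<..m} = {1..m}" "{1..r} \<union> S \<union> ({r<..m} - S) = {1..m}"
    using k assms by auto
  ultimately have "bij_betw \<sigma> {1..m} {1..m}" by simp
  moreover have "\<forall>i\<in>{1..r}. \<sigma> i = i" by (simp add: \<sigma>_def)
  ultimately show thesis
    using that k b01 b2 by (simp add: bij_betw_def)
qed

locale bimodal_collection =
  fixes A :: "nat \<Rightarrow> 'a::{finite, ab_group_add} set" and m :: nat
  assumes disjoint: "\<And>i j. i \<in> {1..m} \<Longrightarrow> j \<in> {1..m} \<Longrightarrow> i \<noteq> j \<Longrightarrow> A i \<inter> A j = {}"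
    and nonempty: "\<And>i. i \<in> {1..m} \<Longrightarrow> A i \<noteq> {}"
    and bimodal: "bimodal A m"
begin

abbreviation U :: "'a set" where "U \<equiv> \<Union>i\<in>{1..m}. A i"

lemma shift_diff_stays_outside:
  assumes i: "i \<in> {1..m}" and b: "b \<in> U - A i" and x: "x \<in> A i" and y: "y \<in> A i"
  shows "b + (y - x) \<in> U - A i"
proof -
  define S where "S = {(a, b'). a \<in> A i \<and> (\<exists>j\<in>{1..m}. j \<noteq> i \<and> b' \<in> A j) \<and> a - b' = x - b}"
  obtain j where j: "j \<in> {1..m}" "j \<noteq> i" "b \<in> A j" using b by blast
  then have "(x, b) \<in> S" unfolding S_def using x by blast
  moreover have "x - b \<noteq> 0" using x b by auto
  \<comment> \<open>bimodality: the count is nonzero, so every element of \<open>A i\<close> has a partner at difference \<open>x - b\<close>\<close>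
  moreover have "card S \<in> {0, card (A i)}"
    using bimodal i \<open>x - b \<noteq> 0\<close> unfolding bimodal_def Ncount_def S_def by blast
  ultimately have "card S = card (A i)" by (auto simp: card_eq_0_iff)
  moreover have "inj_on fst S" unfolding S_def inj_on_def by (auto simp: algebra_simps)
  moreover have "fst ` S \<subseteq> A i" unfolding S_def by auto
  ultimately have "fst ` S = A i" by (intro card_subset_eq) (auto simp: card_image)
  then obtain b' where "(y, b') \<in> S" using y by force
  then obtain j' where "j' \<in> {1..m}" "j' \<noteq> i" "b' \<in> A j'" "y - b' = x - b"
    unfolding S_def by blast
  moreover have "b' = b + (y - x)" using calculation(4) by (simp add: algebra_simps)
  ultimately show ?thesis using disjoint i by blast
qed

lemma idg_subset_periods: "i \<in> {1..m} \<Longrightarrow> idg (A i) \<subseteq> periods (U - A i)"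
  by (rule idg_least[OF add_subgrp_periods[OF finite]])
    (use shift_diff_stays_outside in \<open>auto simp: periods_def\<close>)

lemma shift_stays_outside:
  "i \<in> {1..m} \<Longrightarrow> b \<in> U - A i \<Longrightarrow> h \<in> idg (A i) \<Longrightarrow> b + h \<in> U - A i"
  using idg_subset_periods unfolding periods_def by blast

lemma mem_A_if_diff_mem_idg:
  assumes i: "i \<in> {1..m}" and "x \<in> A i" "y \<in> U" "y - x \<in> idg (A i)"
  shows "y \<in> A i"
proof (rule ccontr)
  assume "y \<notin> A i"
  then have "y + (x - y) \<in> U - A i"
    using assms add_subgrp_uminus[OF add_subgrp_idg] shift_stays_outside[OF i] by fastforce
  with \<open>x \<in> A i\<close> show False by simp
qed

lemma mem_idg_transfer:
  assumes ij: "i \<in> {1..m}" "j \<in> {1..m}" "i \<noteq> j" and Ai: "A i \<subseteq> idg (A i)"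
    and h: "h \<in> idg (A j)" "h \<notin> U"
  shows "h \<in> idg (A i)"
proof -
  obtain y where y: "y \<in> A i" using nonempty ij by blast
  then have "y + h \<in> U" using shift_stays_outside[OF ij(2) _ h(1)] disjoint[OF ij] ij by blast
  moreover have "y + h \<notin> U - A i"
    using shift_stays_outside[OF ij(1), of "y + h" "- y"] Ai y h(2)
      add_subgrp_uminus[OF add_subgrp_idg] by auto
  ultimately have "(y + h) - y \<in> idg (A i)"
    using Ai y add_subgrp_diff[OF add_subgrp_idg] by blast
  then show ?thesis by simp
qed

lemma transl_subset_A_if_idg_subset:
  assumes ij: "i \<in> {1..m}" "j \<in> {1..m}" "i \<noteq> j" and sub: "idg (A j) \<subseteq> idg (A i)"
    and x: "x \<in> A j"
  shows "transl x (idg (A j)) \<subseteq> A j"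
proof
  fix z assume "z \<in> transl x (idg (A j))"
  then have "z - x \<in> idg (A j)" by (simp add: mem_transl_iff)
  moreover have "x + (z - x) \<in> U"
    using shift_stays_outside[OF ij(1), of x "z - x"] sub calculation x disjoint[OF ij] ij by blast
  ultimately show "z \<in> A j" using mem_A_if_diff_mem_idg[OF ij(2) x] by simp
qed

end

locale canonical_bimodal = bimodal_collection +
  fixes D :: "'a set" and p :: nat
  assumes add_subgrp_D: "add_subgrp D"
    and pivot: "p \<in> {1..m}" "A p \<subseteq> idg (A p)" "idg (A p) - A p = D"
begin

definition punctured :: "nat \<Rightarrow> bool" where
  "punctured i \<longleftrightarrow> A i \<subseteq> idg (A i) \<and> idg (A i) - A i = D"

lemma punctured_pivot: "punctured p"
  using pivot by (simp add: punctured_def)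

lemma D_disjoint_U: "d \<in> D \<Longrightarrow> d \<notin> U"
proof
  assume d: "d \<in> D" "d \<in> U"
  obtain x where x: "x \<in> A p" using nonempty pivot(1) by blast
  have "d - x \<in> idg (A p)"
    using d x pivot add_subgrp_diff[OF add_subgrp_idg] by blast
  then have "d \<in> A p" using mem_A_if_diff_mem_idg[OF pivot(1) x d(2)] by simp
  with d pivot(3) show False by blast
qed

lemma zero_notin_U: "0 \<notin> U"
  using D_disjoint_U add_subgrp_zero[OF add_subgrp_D] by blast

lemma idg_inter_subset_D:
  assumes ij: "i \<in> {1..m}" "j \<in> {1..m}" "i \<noteq> j" and "punctured i"
  shows "idg (A i) \<inter> idg (A j) \<subseteq> D"
proof
  fix k assume k: "k \<in> idg (A i) \<inter> idg (A j)"
  show "k \<in> D"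
  proof (rule ccontr)
    assume "k \<notin> D"
    then have "k \<in> U - A j" using k \<open>punctured i\<close> disjoint[OF ij] ij unfolding punctured_def by blast
    then have "k + - k \<in> U"
      using shift_stays_outside[OF ij(2)] add_subgrp_uminus[OF add_subgrp_idg] k by blast
    with zero_notin_U show False by simp
  qed
qed

lemma subset_idg_if_idg_meets_U:
  assumes j: "j \<in> {1..m}" and u: "u \<in> idg (A j)" "u \<in> U"
  shows "A j \<subseteq> idg (A j)"
proof (cases "u \<in> A j")
  case True
  then show ?thesis using u(1) subset_idg_if_mem by blast
next
  case False
  then have "u + - u \<in> U"
    using shift_stays_outside[OF j] add_subgrp_uminus[OF add_subgrp_idg] u by blast
  with zero_notin_U show ?thesis by simp
qed

lemma subset_idg_if_deficient:
  assumes ij: "i \<in> {1..m}" "j \<in> {1..m}" "i \<noteq> j" and "punctured i"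
    and deficient: "card (A j) < card (idg (A j))"
  shows "A j \<subseteq> idg (A j)"
proof (rule ccontr)
  assume "\<not> A j \<subseteq> idg (A j)"
  then have outside: "h \<notin> U" if "h \<in> idg (A j)" for h
    using subset_idg_if_idg_meets_U[OF ij(2)] that by blast
  have "idg (A j) \<subseteq> idg (A i)"
    using mem_idg_transfer[OF ij] \<open>punctured i\<close> outside unfolding punctured_def by blast
  moreover obtain x where "x \<in> A j" using nonempty ij by blast
  ultimately have "card (idg (A j)) \<le> card (A j)"
    using transl_subset_A_if_idg_subset[OF ij] card_mono[OF finite] by (metis card_transl)
  with deficient show False by simp
qed

lemma punctured_if_subset_idg:
  assumes ij: "i \<in> {1..m}" "j \<in> {1..m}" "i \<noteq> j" and "punctured i"
    and Aj: "A j \<subseteq> idg (A j)"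
  shows "punctured j"
proof -
  have "D \<subseteq> idg (A j)"
    using mem_idg_transfer[OF ij(2,1) _ Aj] D_disjoint_U \<open>punctured i\<close> ij(3)
    unfolding punctured_def by blast
  moreover have "e \<in> D" if e: "e \<in> idg (A j)" "e \<notin> A j" for e
  proof -
    obtain x where "x \<in> A j" using nonempty ij by blast
    then have "e \<notin> U"
      using mem_A_if_diff_mem_idg[OF ij(2)] Aj e add_subgrp_diff[OF add_subgrp_idg] by blast
    then have "e \<in> idg (A i)"
      using mem_idg_transfer[OF ij] \<open>punctured i\<close> e(1) unfolding punctured_def by blast
    then show ?thesis using idg_inter_subset_D[OF ij \<open>punctured i\<close>] e(1) by blast
  qed
  ultimately show ?thesis
    using Aj D_disjoint_U ij(2) unfolding punctured_def by blast
qed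

lemma punctured_if_deficient:
  "j \<in> {1..m} \<Longrightarrow> card (A j) < card (idg (A j)) \<Longrightarrow> punctured j"
  using punctured_pivot pivot(1) subset_idg_if_deficient punctured_if_subset_idg by metis

lemma idg_disjoint_U_if_not_deficient:
  assumes j: "j \<in> {1..m}" and "card (idg (A j)) \<le> card (A j)"
  shows "idg (A j) \<inter> U = {}"
proof (rule ccontr)
  assume "idg (A j) \<inter> U \<noteq> {}"
  then have "A j \<subseteq> idg (A j)" using subset_idg_if_idg_meets_U[OF j] by blast
  then have "A j = idg (A j)"
    using card_seteq[OF finite] assms(2) by blast
  then show False
    using zero_notin_U add_subgrp_zero[OF add_subgrp_idg] j by blast
qed

lemma idg_subset_D_if_not_deficient:
  assumes j: "j \<in> {1..m}" "p \<noteq> j" and "card (idg (A j)) \<le> card (A j)"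
  shows "idg (A j) \<subseteq> D"
proof
  fix h assume h: "h \<in> idg (A j)"
  then have "h \<notin> U" using idg_disjoint_U_if_not_deficient[OF j(1) assms(3)] by blast
  then have "h \<in> idg (A p)" using mem_idg_transfer[OF pivot(1) j pivot(2) h] by blast
  then show "h \<in> D" using idg_inter_subset_D[OF pivot(1) j punctured_pivot] h by blast
qed

end

locale bimodal_star = canonical_bimodal +
  fixes r :: nat
  assumes r_le_m: "r \<le> m"
    and deficient_iff: "\<And>i. i \<in> {1..m} \<Longrightarrow> card (A i) < card (idg (A i)) \<longleftrightarrow> i \<le> r"
begin

abbreviation Hsum :: "'a set" where "Hsum \<equiv> sumset (\<lambda>i. idg (A i)) r"

lemma punctured_star: "i \<in> {1..r} \<Longrightarrow> punctured i"
  using punctured_if_deficient deficient_iff r_le_m by auto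

lemma pivot_le_r: "p \<le> r"
proof -
  have "D \<noteq> {}" using add_subgrp_zero[OF add_subgrp_D] by blast
  then have "A p \<subset> idg (A p)" using pivot by blast
  then show ?thesis using deficient_iff[OF pivot(1)] psubset_card_mono[OF finite] by blast
qed

lemma not_deficient:
  assumes "j \<in> {r<..m}"
  shows "j \<in> {1..m}" "card (idg (A j)) \<le> card (A j)"
proof -
  show j: "j \<in> {1..m}" using assms pivot(1) pivot_le_r by auto
  show "card (idg (A j)) \<le> card (A j)" using deficient_iff[OF j] assms by auto
qed

lemma idg_subset_D:
  assumes "j \<in> {r<..m}"
  shows "idg (A j) \<subseteq> D"
proof (rule idg_subset_D_if_not_deficient)
  show "p \<noteq> j" using pivot_le_r assms by auto
qed (use not_deficient[OF assms] in auto)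

lemma A_eq_transl: "j \<in> {r<..m} \<Longrightarrow> x \<in> A j \<Longrightarrow> A j = transl x (idg (A j))"
  using eq_transl_idg_if_card_le not_deficient by blast

lemma add_subgrp_Hsum: "add_subgrp Hsum"
  using add_subgrp_sumset[of r "\<lambda>i. idg (A i)"] add_subgrp_idg by blast

lemma idg_subset_Hsum: "i \<in> {1..r} \<Longrightarrow> idg (A i) \<subseteq> Hsum"
  using subset_sumset[of r "\<lambda>i. idg (A i)"] add_subgrp_zero[OF add_subgrp_idg] by blast

lemma D_subset_Hsum: "D \<subseteq> Hsum"
  using idg_subset_Hsum[of p] punctured_star[of p] pivot_le_r pivot(1)
  unfolding punctured_def by auto

lemma Hsum_subset_D_Un_U: "Hsum \<subseteq> D \<union> U"
proof
  fix s assume "s \<in> Hsum"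
  then have "0 + s \<in> D \<union> U"
  proof (rule sumset_translate_closed[rotated 2])
    show "0 \<in> D \<union> U" using add_subgrp_zero[OF add_subgrp_D] by simp
    fix i v h assume i: "i \<in> {1..r}" and v: "v \<in> D \<union> U" and h: "h \<in> idg (A i)"
    have im: "i \<in> {1..m}" using i r_le_m by simp
    show "v + h \<in> D \<union> U"
    proof (cases "v \<in> idg (A i)")
      case True
      then have "v + h \<in> idg (A i)" using h add_subgrp_add[OF add_subgrp_idg] by blast
      then show ?thesis using punctured_star[OF i] im unfolding punctured_def by blast
    next
      case False
      then have "v \<in> U - A i" using v punctured_star[OF i] unfolding punctured_def by blast
      then show ?thesis using shift_stays_outside[OF im _ h] by blast
    qed
  qed
  then show "s \<in> D \<union> U" by simp
qed

lemma transl_Hsum_subset_outside: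
  assumes "x \<in> U - Hsum"
  shows "transl x Hsum \<subseteq> U - Hsum"
  unfolding transl_def image_subset_iff
proof (rule ballI, rule sumset_translate_closed[OF assms])
  fix i v h assume i: "i \<in> {1..r}" and v: "v \<in> U - Hsum" and h: "h \<in> idg (A i)"
  have "v \<notin> A i" using v punctured_star[OF i] idg_subset_Hsum[OF i] unfolding punctured_def by blast
  then have "v + h \<in> U" using shift_stays_outside[of i v h] i r_le_m v h by auto
  moreover have "v + h \<notin> Hsum"
    using add_subgrp_diff[OF add_subgrp_Hsum, of "v + h" h] idg_subset_Hsum[OF i] h v by auto
  ultimately show "v + h \<in> U - Hsum" by blast
qed

definition inner :: "nat set" where
  "inner = {j \<in> {r<..m}. A j \<subseteq> Hsum}"

lemma mem_Hsum_iff_inner: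
  assumes j: "j \<in> {r<..m}" and y: "y \<in> A j"
  shows "y \<in> Hsum \<longleftrightarrow> j \<in> inner"
proof -
  have K: "idg (A j) \<subseteq> Hsum" using idg_subset_D[OF j] D_subset_Hsum by blast
  have "z \<in> Hsum \<longleftrightarrow> y \<in> Hsum" if "z \<in> A j" for z
    using mem_transl_subgrp_iff[OF add_subgrp_Hsum K] A_eq_transl[OF j y] that by blast
  then show ?thesis using j y unfolding inner_def by blast
qed

lemma Union_inner: "(\<Union>j\<in>{1..r} \<union> inner. A j) = Hsum - D"
proof (intro equalityI subsetI)
  fix y assume "y \<in> (\<Union>j\<in>{1..r} \<union> inner. A j)"
  then obtain j where j: "j \<in> {1..r} \<union> inner" "y \<in> A j" by blast
  then have "y \<in> U" using r_le_m unfolding inner_def by auto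
  moreover have "y \<in> Hsum"
    using j idg_subset_Hsum punctured_star unfolding inner_def punctured_def by blast
  ultimately show "y \<in> Hsum - D" using D_disjoint_U by blast
next
  fix y assume y: "y \<in> Hsum - D"
  then obtain j where j: "j \<in> {1..m}" "y \<in> A j" using Hsum_subset_D_Un_U by blast
  then show "y \<in> (\<Union>j\<in>{1..r} \<union> inner. A j)"
    using mem_Hsum_iff_inner[of j y] y by (cases "j \<le> r") auto
qed

lemma Union_outer: "(\<Union>j\<in>{r<..m} - inner. A j) = U - Hsum"
proof (intro equalityI subsetI)
  fix y assume "y \<in> (\<Union>j\<in>{r<..m} - inner. A j)"
  then obtain j where "j \<in> {r<..m} - inner" "y \<in> A j" by blast
  then show "y \<in> U - Hsum" using mem_Hsum_iff_inner[of j y] by auto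
next
  fix y assume y: "y \<in> U - Hsum"
  then obtain j where j: "j \<in> {1..m}" "y \<in> A j" by blast
  have "\<not> j \<le> r" using j y idg_subset_Hsum punctured_star unfolding punctured_def by force
  then show "y \<in> (\<Union>j\<in>{r<..m} - inner. A j)" using j y mem_Hsum_iff_inner[of j y] by auto
qed

lemma idg_inter_eq_D:
  assumes "i \<in> {1..r}" "j \<in> {1..r}" "i \<noteq> j"
  shows "idg (A i) \<inter> idg (A j) = D"
proof
  show "idg (A i) \<inter> idg (A j) \<subseteq> D"
    using idg_inter_subset_D[of i j] punctured_star[of i] assms r_le_m by simp
  show "D \<subseteq> idg (A i) \<inter> idg (A j)"
    using punctured_star[of i] punctured_star[of j] assms unfolding punctured_def by blast
qed

lemma A_eq_idg_minus_D: "i \<in> {1..r} \<Longrightarrow> A i = idg (A i) - D"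
  using punctured_star unfolding punctured_def by blast

lemma coset_of_subgrp_of_D:
  "j \<in> {r<..m} \<Longrightarrow> \<exists>K. add_subgrp K \<and> K \<subseteq> D \<and> is_coset_of (A j) K"
proof -
  assume j: "j \<in> {r<..m}"
  obtain x where x: "x \<in> A j" using nonempty not_deficient(1)[OF j] by blast
  show ?thesis
    using idg_subset_D[OF j] A_eq_transl[OF j x] add_subgrp_idg unfolding is_coset_of_def by blast
qed

lemma coset_within_Hsum_coset:
  assumes j: "j \<in> {r<..m}"
  shows "\<exists>K c. add_subgrp K \<and> is_coset_of (A j) K \<and> A j \<subseteq> transl c Hsum"
proof -
  obtain x where x: "x \<in> A j" using nonempty not_deficient(1)[OF j] by blast
  have "A j \<subseteq> transl x Hsum"
  proof
    fix y assume "y \<in> A j"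
    then have "y - x \<in> Hsum" using diff_mem_idg[OF _ x] idg_subset_D[OF j] D_subset_Hsum by blast
    then show "y \<in> transl x Hsum" by (simp add: mem_transl_iff)
  qed
  then show ?thesis
    using A_eq_transl[OF j x] add_subgrp_idg unfolding is_coset_of_def by blast
qed

end

theorem theorem3p10:
  fixes A :: "nat \<Rightarrow> 'a::{finite, ab_group_add} set"
    and m r :: nat and a1 :: 'a
  defines "H \<equiv> \<lambda>i. idg (A i)"
  defines "D \<equiv> transl a1 (H 1) - A 1"
  defines "HH \<equiv> sumset H r"
  assumes disj: "\<forall>i\<in>{1..m}. \<forall>j\<in>{1..m}. i \<noteq> j \<longrightarrow> A i \<inter> A j = {}"
    and nonempty: "\<forall>i\<in>{1..m}. A i \<noteq> {}"
    and bim: "bimodal A m"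
    and r2: "2 \<le> r" and rm: "r \<le> m"
    and label: "\<forall>i\<in>{1..m}. (card (A i) < card (H i) \<longleftrightarrow> i \<le> r)"
    and a1: "a1 \<in> A 1"
    and canon: "add_subgrp D"
  shows "(\<forall>i\<in>{1..r}. \<forall>j\<in>{1..r}. i \<noteq> j \<longrightarrow> H i \<inter> H j = D)
       \<and> (\<forall>i\<in>{1..r}. A i = H i - D)
       \<and> (\<forall>i\<in>{r<..m}. \<exists>K. add_subgrp K \<and> K \<subseteq> D \<and> is_coset_of (A i) K)
       \<and> HH - D \<subseteq> (\<Union>i\<in>{1..m}. A i)
       \<and> (\<exists>\<sigma> k. bij_betw \<sigma> {1..m} {1..m} \<and> (\<forall>i\<in>{1..r}. \<sigma> i = i)
              \<and> r \<le> k \<and> k \<le> m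
              \<and> (\<Union>i\<in>{1..k}. A (\<sigma> i)) = HH - D
              \<and> (k < m \<longrightarrow>
                   (\<forall>x\<in>(\<Union>i\<in>{k<..m}. A (\<sigma> i)). transl x HH \<subseteq> (\<Union>i\<in>{k<..m}. A (\<sigma> i)))
                 \<and> (\<forall>i\<in>{k<..m}. \<exists>K c. add_subgrp K \<and> is_coset_of (A (\<sigma> i)) K
                                     \<and> A (\<sigma> i) \<subseteq> transl c HH)))"
proof -
  have "0 \<in> transl a1 (H 1)" using add_subgrp_zero[OF canon] unfolding D_def by blast
  then have pivot: "transl a1 (H 1) = H 1" "A 1 \<subseteq> H 1"
    using transl_idg_eq_if_zero_mem[OF a1] unfolding H_def by auto
  interpret bimodal_star A m D 1 r
    using disj nonempty bim canon pivot label r2 rm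
    by unfold_locales (auto simp: D_def H_def)
  obtain \<sigma> k where \<sigma>: "bij_betw \<sigma> {1..m} {1..m}" "\<forall>i\<in>{1..r}. \<sigma> i = i" "r \<le> k" "k \<le> m"
    "\<sigma> ` {1..k} = {1..r} \<union> inner" "\<sigma> ` {k<..m} = {r<..m} - inner"
    using obtain_perm_splitting[OF rm, of inner] unfolding inner_def by blast
  have reindex: "(\<Union>i\<in>I. A (\<sigma> i)) = (\<Union>j\<in>\<sigma> ` I. A j)" for I by (simp add: image_image)
  have union_low: "(\<Union>i\<in>{1..k}. A (\<sigma> i)) = HH - D"
    and union_high: "(\<Union>i\<in>{k<..m}. A (\<sigma> i)) = U - HH"
    using Union_inner Union_outer \<sigma>(5,6) unfolding HH_def H_def reindex by simp_all
  have "\<forall>x\<in>(\<Union>i\<in>{k<..m}. A (\<sigma> i)). transl x HH \<subseteq> (\<Union>i\<in>{k<..m}. A (\<sigma> i))"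
    using transl_Hsum_subset_outside unfolding union_high HH_def H_def by blast
  moreover have "\<forall>i\<in>{k<..m}. \<exists>K c. add_subgrp K \<and> is_coset_of (A (\<sigma> i)) K \<and> A (\<sigma> i) \<subseteq> transl c HH"
    using coset_within_Hsum_coset \<sigma>(6) unfolding HH_def H_def by blast
  moreover have "\<forall>i\<in>{1..r}. \<forall>j\<in>{1..r}. i \<noteq> j \<longrightarrow> H i \<inter> H j = D"
    using idg_inter_eq_D unfolding H_def by blast
  moreover have "\<forall>i\<in>{1..r}. A i = H i - D"
    using A_eq_idg_minus_D unfolding H_def by blast
  moreover have "\<forall>i\<in>{r<..m}. \<exists>K. add_subgrp K \<and> K \<subseteq> D \<and> is_coset_of (A i) K"
    using coset_of_subgrp_of_D by blast
  moreover have "HH - D \<subseteq> (\<Union>i\<in>{1..m}. A i)"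
    using Hsum_subset_D_Un_U unfolding HH_def H_def by blast
  ultimately show ?thesis
    using \<sigma>(1-4) union_low by blast
qed

end
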